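(* Let $q$ be a prime power and $n\ge k\ge0$ integers. Let $V_1,\dots,V_k$ be subspaces of $\mathbb{F}_q^n$ such that $\dim\big(\bigcap_{i\in\Omega}V_i\big)\le k-|\Omega|$ for all nonempty $\Omega\subseteq[k]$. Then there exist subspaces $V_i'$ of $\mathbb{F}_q^n$ with $V_i\subseteq V_i'$, $i=1,\dots,k$, such that (1) $\dim\big(\bigcap_{i\in\Omega}V_i'\big)\le k-|\Omega|$ for all nonempty $\Omega\subseteq[k]$, and (2) $\dim V_i'=k-1$ for all $i\in[k]$. *)

theory Defs
  imports "HOL-Analysis.Analysis"
begin

end

(*
  Induction on the total deficiency of the dimensions, sum_i (k - 1 - dim V_i): while some
  V_i has dimension at most k - 2, replace it by the span of V_i and a suitable vector v.
  Call a set Omega containing i and another index tight if the bound for Omega is attained.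
  Enlarging V_i by one vector raises dim (Inter_{j in Omega} V_j) by at most one, so only tight
  Omega can break, and they do not if v lies outside V_i + Inter_{j in Omega - {i}} V_j.
  Grassmann's formula, combined with the bounds for Omega Un Omega' and Omega Int Omega', shows
  that each of these sums is either V_i itself or one and the same space of dimension
  dim V_i + 1 < n; any v outside that space works.
*)

theory Submission
  imports Defs
begin

context finite_dimensional_vector_space
begin

lemma dim_span_Un_Int:
  assumes "subspace S" "subspace T"
  shows "dim (span (S \<union> T)) + dim (S \<inter> T) = dim S + dim T"
  using dim_sums_Int[OF assms] assms by (simp add: span_Un span_eq_iff[THEN iffD2])

lemma dim_span_insert_Int_le:
  assumes "subspace S" "subspace T"
  shows "dim (span (insert v S) \<inter> T) \<le> dim (S \<inter> T) + 1"
proof -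
  have "dim (span (insert v S)) \<le> dim S + 1"
    by (simp add: dim_insert)
  moreover have "dim (span (S \<union> T)) \<le> dim (span (span (insert v S) \<union> T))"
    by (intro dim_subset span_mono) (auto intro: span_base)
  ultimately show ?thesis
    using dim_span_Un_Int[OF assms] dim_span_Un_Int[OF subspace_span assms(2), of "insert v S"]
    by linarith
qed

lemma span_insert_Int_eq:
  assumes "subspace S" "subspace T" "v \<notin> span (S \<union> T)"
  shows "span (insert v S) \<inter> T = S \<inter> T"
proof (intro equalityI subsetI)
  fix x assume x: "x \<in> span (insert v S) \<inter> T"
  then obtain c where c: "x - c *s v \<in> S"
    using span_breakdown_eq assms(1) by (auto simp: span_eq_iff[THEN iffD2])
  have "c = 0"
  proof (rule ccontr)
    assume "c \<noteq> 0"
    have "x \<in> span (S \<union> T)" "x - c *s v \<in> span (S \<union> T)"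
      using c x by (auto intro: span_base)
    then have "inverse c *s (x - (x - c *s v)) \<in> span (S \<union> T)"
      by (meson span_scale span_diff)
    with \<open>c \<noteq> 0\<close> assms(3) show False
      by simp
  qed
  then show "x \<in> S \<inter> T" using c x by simp
qed (auto intro: span_base)

lemma span_Un_eq_if_Int_not_subset:
  assumes "subspace S" "subspace A" "subspace B"
    and "dim (span (S \<union> A)) \<le> dim S + 1" "dim (span (S \<union> B)) \<le> dim S + 1"
    and "\<not> A \<inter> B \<subseteq> S"
  shows "span (S \<union> A) = span (S \<union> B)"
proof -
  let ?C = "span (S \<union> (A \<inter> B))"
  have "S \<subseteq> ?C" "A \<inter> B \<subseteq> ?C"
    by (auto intro: span_base)
  then have "span S \<subset> ?C"
    using assms(1,6) by (auto simp: span_eq_iff[THEN iffD2])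
  then have "dim S < dim ?C"
    using dim_psubset[of S ?C] by (simp add: span_span)
  moreover have "?C \<subseteq> span (S \<union> A)" "?C \<subseteq> span (S \<union> B)"
    by (intro span_mono; auto)+
  ultimately have "?C = span (S \<union> A)" "?C = span (S \<union> B)"
    using assms(4,5) by (intro subspace_dim_equal; simp)+
  then show ?thesis by simp
qed

end

definition dim_Inter_bounded :: "nat \<Rightarrow> 'i set \<Rightarrow> ('i \<Rightarrow> ('a::field ^ 'n) set) \<Rightarrow> bool" where
  "dim_Inter_bounded k I V \<longleftrightarrow>
     (\<forall>\<Omega>. \<Omega> \<subseteq> I \<longrightarrow> \<Omega> \<noteq> {} \<longrightarrow> vec.dim (\<Inter>j\<in>\<Omega>. V j) \<le> k - card \<Omega>)"

lemma dim_Inter_bounded_iff: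
  fixes V :: "'i \<Rightarrow> ('a::field ^ 'n) set"
  assumes "finite I" "card I \<le> k"
  shows "dim_Inter_bounded k I V \<longleftrightarrow>
           (\<forall>\<Omega>. \<Omega> \<subseteq> I \<longrightarrow> \<Omega> \<noteq> {} \<longrightarrow> vec.dim (\<Inter>j\<in>\<Omega>. V j) + card \<Omega> \<le> k)"
proof -
  have "card \<Omega> \<le> k" if "\<Omega> \<subseteq> I" for \<Omega>
    using card_mono[OF assms(1) that] assms(2) by linarith
  then show ?thesis
    unfolding dim_Inter_bounded_def by (auto simp: le_diff_conv2)
qed

context
  fixes k :: nat and I :: "'i set" and V :: "'i \<Rightarrow> ('a::field ^ 'n) set" and i :: 'i
  assumes finite_I: "finite I"
    and subspace_V: "\<And>j. j \<in> I \<Longrightarrow> vec.subspace (V j)"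
    and bounded: "\<And>\<Omega>. \<Omega> \<subseteq> I \<Longrightarrow> \<Omega> \<noteq> {} \<Longrightarrow> vec.dim (\<Inter>j\<in>\<Omega>. V j) + card \<Omega> \<le> k"
    and i_in_I: "i \<in> I"
    and dim_V_i: "vec.dim (V i) + 2 \<le> k"
begin

definition Inter_rest :: "'i set \<Rightarrow> ('a::field ^ 'n) set" where
  "Inter_rest \<Omega> = (\<Inter>j\<in>\<Omega> - {i}. V j)"

definition tight :: "'i set \<Rightarrow> bool" where
  "tight \<Omega> \<longleftrightarrow> \<Omega> \<subseteq> I \<and> i \<in> \<Omega> \<and> \<Omega> \<noteq> {i} \<and> k \<le> vec.dim (\<Inter>j\<in>\<Omega>. V j) + card \<Omega>"

lemma subspace_Inter_family: "\<Omega> \<subseteq> I \<Longrightarrow> vec.subspace (\<Inter>j\<in>\<Omega>. V j)"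
  using subspace_V by (intro vec.subspace_Inter) blast

lemma subspace_Inter_rest: "\<Omega> \<subseteq> I \<Longrightarrow> vec.subspace (Inter_rest \<Omega>)"
  unfolding Inter_rest_def by (rule subspace_Inter_family) blast

lemma Inter_fun_upd_eq: "i \<in> \<Omega> \<Longrightarrow> (\<Inter>j\<in>\<Omega>. (V(i := S)) j) = S \<inter> Inter_rest \<Omega>"
  unfolding Inter_rest_def by (auto split: if_splits)

lemma Inter_eq_Int_Inter_rest: "i \<in> \<Omega> \<Longrightarrow> (\<Inter>j\<in>\<Omega>. V j) = V i \<inter> Inter_rest \<Omega>"
  using Inter_fun_upd_eq[of \<Omega> "V i"] by simp

lemma dim_Inter_rest_le:
  assumes "\<Omega> \<subseteq> I" "i \<in> \<Omega>" "\<Omega> \<noteq> {i}"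
  shows "vec.dim (Inter_rest \<Omega>) + card \<Omega> \<le> k + 1"
proof -
  have "vec.dim (Inter_rest \<Omega>) + card (\<Omega> - {i}) \<le> k"
    unfolding Inter_rest_def using assms by (intro bounded) auto
  moreover have "card \<Omega> = card (\<Omega> - {i}) + 1"
    using card.remove[OF finite_subset[OF assms(1) finite_I] assms(2)] by simp
  ultimately show ?thesis by linarith
qed

lemma tight_not_subset_dims:
  assumes "tight \<Omega>" "\<not> Inter_rest \<Omega> \<subseteq> V i"
  shows "vec.dim (Inter_rest \<Omega>) + card \<Omega> = k + 1"
    and "vec.dim (vec.span (V i \<union> Inter_rest \<Omega>)) = vec.dim (V i) + 1"
proof -
  have \<Omega>: "\<Omega> \<subseteq> I" "i \<in> \<Omega>" "\<Omega> \<noteq> {i}" and tight: "k \<le> vec.dim (\<Inter>j\<in>\<Omega>. V j) + card \<Omega>"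
    using assms(1) unfolding tight_def by auto
  have sub: "vec.subspace (V i)" "vec.subspace (Inter_rest \<Omega>)"
    using subspace_V[OF i_in_I] subspace_Inter_rest[OF \<Omega>(1)] by auto
  have "V i \<subseteq> vec.span (V i \<union> Inter_rest \<Omega>)" "Inter_rest \<Omega> \<subseteq> vec.span (V i \<union> Inter_rest \<Omega>)"
    by (auto intro: vec.span_base)
  with assms(2) have "vec.span (V i) \<subset> vec.span (V i \<union> Inter_rest \<Omega>)"
    using sub(1) by (auto simp: vec.span_eq_iff[THEN iffD2])
  then have "vec.dim (V i) < vec.dim (vec.span (V i \<union> Inter_rest \<Omega>))"
    using vec.dim_psubset[of "V i" "V i \<union> Inter_rest \<Omega>"] by simp
  moreover have "vec.dim (V i \<inter> Inter_rest \<Omega>) + card \<Omega> = k"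
    using tight bounded[of \<Omega>] \<Omega> Inter_eq_Int_Inter_rest[OF \<Omega>(2)] by fastforce
  moreover note vec.dim_span_Un_Int[OF sub] dim_Inter_rest_le[OF \<Omega>]
  ultimately show "vec.dim (Inter_rest \<Omega>) + card \<Omega> = k + 1"
    and "vec.dim (vec.span (V i \<union> Inter_rest \<Omega>)) = vec.dim (V i) + 1"
    by linarith+
qed

lemma tight_Int_ne_singleton:
  assumes "tight \<Omega>" "tight \<Omega>'"
  shows "\<Omega> \<inter> \<Omega>' \<noteq> {i}"
proof
  assume singleton: "\<Omega> \<inter> \<Omega>' = {i}"
  have \<Omega>: "\<Omega> \<subseteq> I" "k \<le> vec.dim (\<Inter>j\<in>\<Omega>. V j) + card \<Omega>"
    and \<Omega>': "\<Omega>' \<subseteq> I" "k \<le> vec.dim (\<Inter>j\<in>\<Omega>'. V j) + card \<Omega>'"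
    using assms unfolding tight_def by auto
  let ?P = "\<Inter>j\<in>\<Omega>. V j" and ?Q = "\<Inter>j\<in>\<Omega>'. V j"
  have "?P \<subseteq> V i" "?Q \<subseteq> V i"
    using singleton by auto
  then have "vec.span (?P \<union> ?Q) \<subseteq> V i"
    using subspace_V[OF i_in_I] by (intro vec.span_minimal) auto
  then have "vec.dim (vec.span (?P \<union> ?Q)) \<le> vec.dim (V i)"
    by (rule vec.dim_subset)
  moreover have "?P \<inter> ?Q = (\<Inter>j\<in>\<Omega> \<union> \<Omega>'. V j)"
    by auto
  then have "vec.dim (?P \<inter> ?Q) + card (\<Omega> \<union> \<Omega>') \<le> k"
    using \<Omega>(1) \<Omega>'(1) singleton by (auto intro: bounded)
  moreover have "card (\<Omega> \<union> \<Omega>') + 1 = card \<Omega> + card \<Omega>'"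
    using card_Un_Int[OF finite_subset[OF \<Omega>(1) finite_I] finite_subset[OF \<Omega>'(1) finite_I]]
      singleton by simp
  moreover note vec.dim_span_Un_Int[OF subspace_Inter_family[OF \<Omega>(1)] subspace_Inter_family[OF \<Omega>'(1)]]
    \<Omega>(2) \<Omega>'(2) dim_V_i
  ultimately show False
    by linarith
qed

lemma tight_Inter_rest_Int_not_subset:
  assumes "tight \<Omega>" "tight \<Omega>'" "\<not> Inter_rest \<Omega> \<subseteq> V i" "\<not> Inter_rest \<Omega>' \<subseteq> V i"
  shows "\<not> Inter_rest \<Omega> \<inter> Inter_rest \<Omega>' \<subseteq> V i"
proof
  assume Int_subset: "Inter_rest \<Omega> \<inter> Inter_rest \<Omega>' \<subseteq> V i"
  have \<Omega>: "\<Omega> \<subseteq> I" "i \<in> \<Omega>" and \<Omega>': "\<Omega>' \<subseteq> I" "i \<in> \<Omega>'"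
    using assms(1,2) unfolding tight_def by auto
  let ?R = "Inter_rest \<Omega>" and ?R' = "Inter_rest \<Omega>'"
  have "(\<Inter>j\<in>\<Omega> \<union> \<Omega>'. V j) = V i \<inter> (?R \<inter> ?R')"
    using \<Omega>(2) by (auto simp: Inter_rest_def)
  also have "\<dots> = ?R \<inter> ?R'"
    using Int_subset by blast
  finally have "vec.dim (?R \<inter> ?R') + card (\<Omega> \<union> \<Omega>') \<le> k"
    using bounded[of "\<Omega> \<union> \<Omega>'"] \<Omega> \<Omega>' by auto
  moreover have "vec.span (?R \<union> ?R') \<subseteq> Inter_rest (\<Omega> \<inter> \<Omega>')"
    using subspace_Inter_rest[of "\<Omega> \<inter> \<Omega>'"] \<Omega>(1)
    by (intro vec.span_minimal) (auto simp: Inter_rest_def)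
  then have "vec.dim (vec.span (?R \<union> ?R')) \<le> vec.dim (Inter_rest (\<Omega> \<inter> \<Omega>'))"
    by (rule vec.dim_subset)
  moreover have "vec.dim (Inter_rest (\<Omega> \<inter> \<Omega>')) + card (\<Omega> \<inter> \<Omega>') \<le> k + 1"
    using \<Omega> \<Omega>' tight_Int_ne_singleton[OF assms(1,2)] by (intro dim_Inter_rest_le) auto
  moreover have "card (\<Omega> \<union> \<Omega>') + card (\<Omega> \<inter> \<Omega>') = card \<Omega> + card \<Omega>'"
    using card_Un_Int[OF finite_subset[OF \<Omega>(1) finite_I] finite_subset[OF \<Omega>'(1) finite_I]] by simp
  moreover note vec.dim_span_Un_Int[OF subspace_Inter_rest[OF \<Omega>(1)] subspace_Inter_rest[OF \<Omega>'(1)]]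
    tight_not_subset_dims(1)[OF assms(1,3)] tight_not_subset_dims(1)[OF assms(2,4)]
  ultimately show False
    by linarith
qed

lemma tight_span_Un_eq:
  assumes "tight \<Omega>" "tight \<Omega>'" "\<not> Inter_rest \<Omega> \<subseteq> V i" "\<not> Inter_rest \<Omega>' \<subseteq> V i"
  shows "vec.span (V i \<union> Inter_rest \<Omega>) = vec.span (V i \<union> Inter_rest \<Omega>')"
  using assms tight_not_subset_dims(2) tight_Inter_rest_Int_not_subset subspace_V[OF i_in_I]
  by (intro vec.span_Un_eq_if_Int_not_subset subspace_Inter_rest) (auto simp: tight_def)

lemma obtain_subspace_containing_tight:
  obtains W where "vec.subspace W" "V i \<subseteq> W" "vec.dim W \<le> vec.dim (V i) + 1"
    and "\<And>\<Omega>. tight \<Omega> \<Longrightarrow> Inter_rest \<Omega> \<subseteq> W"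
proof (cases "\<exists>\<Omega>\<^sub>0. tight \<Omega>\<^sub>0 \<and> \<not> Inter_rest \<Omega>\<^sub>0 \<subseteq> V i")
  case True
  then obtain \<Omega>\<^sub>0 where \<Omega>\<^sub>0: "tight \<Omega>\<^sub>0" "\<not> Inter_rest \<Omega>\<^sub>0 \<subseteq> V i"
    by blast
  let ?W = "vec.span (V i \<union> Inter_rest \<Omega>\<^sub>0)"
  have "Inter_rest \<Omega> \<subseteq> ?W" if "tight \<Omega>" for \<Omega>
  proof (cases "Inter_rest \<Omega> \<subseteq> V i")
    case True
    then show ?thesis
      by (auto intro: vec.span_base)
  next
    case False
    then have "Inter_rest \<Omega> \<subseteq> vec.span (V i \<union> Inter_rest \<Omega>)"
      by (auto intro: vec.span_base)
    then show ?thesis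
      using tight_span_Un_eq[OF that \<Omega>\<^sub>0(1) False \<Omega>\<^sub>0(2)] by simp
  qed
  moreover have "V i \<subseteq> ?W"
    by (auto intro: vec.span_base)
  ultimately show ?thesis
    using tight_not_subset_dims(2)[OF \<Omega>\<^sub>0] by (intro that[of ?W]) auto
next
  case False
  then show ?thesis
    using that[of "V i"] subspace_V[OF i_in_I] by auto
qed

lemma bounded_fun_upd_span_insert:
  assumes W: "vec.subspace W" "V i \<subseteq> W" "\<And>\<Omega>. tight \<Omega> \<Longrightarrow> Inter_rest \<Omega> \<subseteq> W"
    and "v \<notin> W" "\<Omega> \<subseteq> I" "\<Omega> \<noteq> {}"
  shows "vec.dim (\<Inter>j\<in>\<Omega>. (V(i := vec.span (insert v (V i)))) j) + card \<Omega> \<le> k"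
proof -
  let ?V = "V(i := vec.span (insert v (V i)))"
  consider "i \<notin> \<Omega>" | "\<Omega> = {i}" | "i \<in> \<Omega>" "\<Omega> \<noteq> {i}"
    by blast
  then show ?thesis
  proof cases
    case 1
    then have "(\<Inter>j\<in>\<Omega>. ?V j) = (\<Inter>j\<in>\<Omega>. V j)"
      by auto
    then show ?thesis
      using bounded assms(5,6) by simp
  next
    case 2
    then show ?thesis
      using dim_V_i by (simp add: vec.dim_insert)
  next
    case 3
    have sub: "vec.subspace (V i)" "vec.subspace (Inter_rest \<Omega>)"
      using subspace_V[OF i_in_I] subspace_Inter_rest[OF assms(5)] by auto
    have "vec.dim (vec.span (insert v (V i)) \<inter> Inter_rest \<Omega>) + card \<Omega> \<le> k"
    proof (cases "tight \<Omega>")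
      case True
      then have "vec.span (V i \<union> Inter_rest \<Omega>) \<subseteq> W"
        using W by (intro vec.span_minimal) auto
      then have "vec.span (insert v (V i)) \<inter> Inter_rest \<Omega> = V i \<inter> Inter_rest \<Omega>"
        using assms(4) by (intro vec.span_insert_Int_eq[OF sub]) auto
      then show ?thesis
        using bounded[OF assms(5,6)] Inter_eq_Int_Inter_rest[OF 3(1)] by simp
    next
      case False
      then have "vec.dim (V i \<inter> Inter_rest \<Omega>) + card \<Omega> < k"
        using 3 assms(5) Inter_eq_Int_Inter_rest[OF 3(1)] unfolding tight_def by auto
      then show ?thesis
        using vec.dim_span_insert_Int_le[OF sub, of v] by linarith
    qed
    then show ?thesis
      unfolding Inter_fun_upd_eq[OF 3(1)] .
  qed
qed

lemma obtain_extension_vector: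
  assumes "k \<le> CARD('n)"
  obtains v where "v \<notin> V i"
    and "\<And>\<Omega>. \<Omega> \<subseteq> I \<Longrightarrow> \<Omega> \<noteq> {} \<Longrightarrow>
           vec.dim (\<Inter>j\<in>\<Omega>. (V(i := vec.span (insert v (V i)))) j) + card \<Omega> \<le> k"
proof -
  obtain W where W: "vec.subspace W" "V i \<subseteq> W" "vec.dim W \<le> vec.dim (V i) + 1"
    "\<And>\<Omega>. tight \<Omega> \<Longrightarrow> Inter_rest \<Omega> \<subseteq> W"
    using obtain_subspace_containing_tight by blast
  have "W \<noteq> UNIV"
    using W(3) dim_V_i assms vec_dim_card[where 'a = 'a and 'n = 'n] by auto
  then obtain v where "v \<notin> W"
    by blast
  then show ?thesis
    using that W bounded_fun_upd_span_insert by blast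
qed

end

lemma exists_extension_of_dim_pred:
  fixes V :: "'i \<Rightarrow> ('a::field ^ 'n) set"
  assumes "finite I" "card I \<le> k" "k \<le> CARD('n)"
    and "\<And>j. j \<in> I \<Longrightarrow> vec.subspace (V j)" "dim_Inter_bounded k I V"
  shows "\<exists>V'. (\<forall>j\<in>I. vec.subspace (V' j) \<and> V j \<subseteq> V' j \<and> vec.dim (V' j) = k - 1) \<and>
               dim_Inter_bounded k I V'"
  using assms(4,5)
proof (induction V rule: measure_induct_rule[where f = "\<lambda>V. \<Sum>j\<in>I. k - 1 - vec.dim (V j)"])
  case (less V)
  have bounded: "\<And>\<Omega>. \<Omega> \<subseteq> I \<Longrightarrow> \<Omega> \<noteq> {} \<Longrightarrow> vec.dim (\<Inter>j\<in>\<Omega>. V j) + card \<Omega> \<le> k"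
    using less.prems(2) dim_Inter_bounded_iff[OF assms(1,2)] by blast
  show ?case
  proof (cases "\<forall>j\<in>I. vec.dim (V j) = k - 1")
    case True
    then show ?thesis
      using less.prems by blast
  next
    case False
    have "vec.dim (V j) + 1 \<le> k" if "j \<in> I" for j
      using bounded[of "{j}"] that by simp
    with False obtain i where i: "i \<in> I" "vec.dim (V i) + 2 \<le> k"
      by fastforce
    obtain v where v: "v \<notin> V i"
      and bounded': "\<And>\<Omega>. \<Omega> \<subseteq> I \<Longrightarrow> \<Omega> \<noteq> {} \<Longrightarrow>
           vec.dim (\<Inter>j\<in>\<Omega>. (V(i := vec.span (insert v (V i)))) j) + card \<Omega> \<le> k"
      using obtain_extension_vector[OF assms(1) less.prems(1) bounded i assms(3)] by blast
    define V\<^sub>1 where "V\<^sub>1 = V(i := vec.span (insert v (V i)))"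
    have "vec.dim (V\<^sub>1 i) = vec.dim (V i) + 1"
      using v less.prems(1)[OF i(1)] by (simp add: V\<^sub>1_def vec.dim_insert vec.span_eq_iff[THEN iffD2])
    then have "(\<Sum>j\<in>I. k - 1 - vec.dim (V\<^sub>1 j)) < (\<Sum>j\<in>I. k - 1 - vec.dim (V j))"
      using i by (intro sum_strict_mono_ex1 assms(1)) (auto simp: V\<^sub>1_def)
    moreover have "vec.subspace (V\<^sub>1 j)" if "j \<in> I" for j
      using less.prems(1) that by (simp add: V\<^sub>1_def)
    moreover have "dim_Inter_bounded k I V\<^sub>1"
      using bounded' dim_Inter_bounded_iff[OF assms(1,2)] unfolding V\<^sub>1_def by blast
    ultimately obtain V' where V': "\<forall>j\<in>I. vec.subspace (V' j) \<and> V\<^sub>1 j \<subseteq> V' j \<and> vec.dim (V' j) = k - 1"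
      "dim_Inter_bounded k I V'"
      using less.IH by blast
    have "V j \<subseteq> V\<^sub>1 j" for j
      by (auto simp: V\<^sub>1_def intro: vec.span_base)
    with V' show ?thesis
      by blast
  qed
qed

theorem mainTheorem11:
  fixes V :: "nat \<Rightarrow> ('a::{field,finite} ^ 'n) set"
    and k n :: nat
  assumes "CARD('n) = n" and "k \<le> n"
    and "\<And>i. i \<in> {1..k} \<Longrightarrow> vec.subspace (V i)"
    and "\<And>\<Omega>. \<Omega> \<subseteq> {1..k} \<Longrightarrow> \<Omega> \<noteq> {} \<Longrightarrow>
           vec.dim (\<Inter>i\<in>\<Omega>. V i) \<le> k - card \<Omega>"
  shows "\<exists>V' :: nat \<Rightarrow> ('a ^ 'n) set.
           (\<forall>i\<in>{1..k}. vec.subspace (V' i) \<and> V i \<subseteq> V' i \<and> vec.dim (V' i) = k - 1) \<and>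
           (\<forall>\<Omega>. \<Omega> \<subseteq> {1..k} \<longrightarrow> \<Omega> \<noteq> {} \<longrightarrow>
              vec.dim (\<Inter>i\<in>\<Omega>. V' i) \<le> k - card \<Omega>)"
proof -
  have "dim_Inter_bounded k {1..k} V"
    using assms(4) unfolding dim_Inter_bounded_def by blast
  then show ?thesis
    using exists_extension_of_dim_pred[of "{1..k}" k V] assms(1-3)
    unfolding dim_Inter_bounded_def by simp
qed

end
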